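(* Let $f,g\in\mathbb{F}[Y,Z]$. If $g$ is a linear form, then $\mathrm{maxrank}(M_{fg})\le 2\cdot\mathrm{maxrank}(M_f)$.
   Context: $\mathbb{F}$ is a field, $Y=\{y_1,\dots,y_m\}$ and $Z=\{z_1,\dots,z_m\}$ are disjoint sets of variables. For $f\in\mathbb{F}[Y,Z]$, the polynomial coefficient matrix $M_f$ is the $2^m\times 2^m$ matrix with entries in $\mathbb{F}[Y,Z]$, rows indexed by monic multilinear monomials $p$ in $Y$ and columns by monic multilinear monomials $q$ in $Z$, where $M_f(p,q)=G$ if and only if $f$ can be uniquely written as $f=pq\,G+Q$ with $G$ containing no variable other than those present in $p$ and $q$, and $Q$ having no monomial which is divisible by $pq$ and contains only variables present in $p$ and $q$. For $S:Y\cup Z\to\mathbb{F}$, $M_f|_S$ is obtained by evaluating each entry at $S$, and $\mathrm{maxrank}(M_f)=\max_S\mathrm{rank}(M_f|_S)$. *)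

theory Defs
  imports "HOL-Library.Poly_Mapping" "Jordan_Normal_Form.DL_Rank"
begin

type_synonym ('v, 'a) mpoly = "('v \<Rightarrow>\<^sub>0 nat) \<Rightarrow>\<^sub>0 'a"

definition vars :: "('v, 'a::zero) mpoly \<Rightarrow> 'v set" where
  "vars p = (\<Union>\<mu>\<in>Poly_Mapping.keys p. Poly_Mapping.keys \<mu>)"

definition total_deg :: "('v \<Rightarrow>\<^sub>0 nat) \<Rightarrow> nat" where
  "total_deg \<mu> = (\<Sum>v\<in>Poly_Mapping.keys \<mu>. Poly_Mapping.lookup \<mu> v)"

definition linear_form :: "'v set \<Rightarrow> ('v, 'a::zero) mpoly \<Rightarrow> bool" where
  "linear_form X g \<longleftrightarrow> vars g \<subseteq> X \<and> (\<forall>\<mu>\<in>Poly_Mapping.keys g. total_deg \<mu> = 1)"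

definition ml_mono :: "'v set \<Rightarrow> 'v \<Rightarrow>\<^sub>0 nat" where
  "ml_mono A = (\<Sum>v\<in>A. Poly_Mapping.single v 1)"

definition ml_poly :: "'v set \<Rightarrow> ('v, 'a::{zero,one}) mpoly" where
  "ml_poly A = Poly_Mapping.single (ml_mono A) 1"

definition mdvd :: "('v \<Rightarrow>\<^sub>0 nat) \<Rightarrow> ('v \<Rightarrow>\<^sub>0 nat) \<Rightarrow> bool" where
  "mdvd \<mu> \<nu> \<longleftrightarrow> (\<forall>v. Poly_Mapping.lookup \<mu> v \<le> Poly_Mapping.lookup \<nu> v)"

text \<open>Entry M_f(p,q) for p = ml_poly P (P \<subseteq> Y), q = ml_poly Q (Q \<subseteq> Z):
  the unique G with f = p q G + R, vars G \<subseteq> P \<union> Q, and no monomial of R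
  divisible by pq containing only variables from P \<union> Q.\<close>
definition pcm_entry :: "('v, 'a::field) mpoly \<Rightarrow> 'v set \<Rightarrow> 'v set \<Rightarrow> ('v, 'a) mpoly" where
  "pcm_entry f P Q = (THE G. vars G \<subseteq> P \<union> Q \<and>
     (\<exists>R. f = ml_poly P * ml_poly Q * G + R \<and>
        (\<forall>\<mu>\<in>Poly_Mapping.keys R. \<not> (mdvd (ml_mono (P \<union> Q)) \<mu> \<and> Poly_Mapping.keys \<mu> \<subseteq> P \<union> Q))))"

definition peval :: "('v \<Rightarrow> 'a::comm_semiring_1) \<Rightarrow> ('v, 'a) mpoly \<Rightarrow> 'a" where
  "peval S p = (\<Sum>\<mu>\<in>Poly_Mapping.keys p. Poly_Mapping.lookup p \<mu> * (\<Prod>v\<in>Poly_Mapping.keys \<mu>. S v ^ Poly_Mapping.lookup \<mu> v))"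

text \<open>A fixed enumeration (without repetition) of the subsets of a finite set,
  used to index rows/columns; the rank does not depend on this choice.\<close>
definition subset_enum :: "'v set \<Rightarrow> 'v set list" where
  "subset_enum A = (SOME xs. set xs = Pow A \<and> distinct xs)"

definition pcm_eval :: "'v set \<Rightarrow> 'v set \<Rightarrow> ('v, 'a::field) mpoly \<Rightarrow> ('v \<Rightarrow> 'a) \<Rightarrow> 'a mat" where
  "pcm_eval Y Z f S = mat (length (subset_enum Y)) (length (subset_enum Z))
     (\<lambda>(i, j). peval S (pcm_entry f (subset_enum Y ! i) (subset_enum Z ! j)))"

definition mat_rank :: "'a::field mat \<Rightarrow> nat" where
  "mat_rank A = vec_space.rank (dim_row A) A"

definition maxrank :: "'v set \<Rightarrow> 'v set \<Rightarrow> ('v, 'a::field) mpoly \<Rightarrow> nat" where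
  "maxrank Y Z f = Max {mat_rank (pcm_eval Y Z f S) | S. True}"

end

theory Submission
  imports Defs
begin

(* Write g = \<Sum>\<^sub>v a\<^sub>v x\<^sub>v. Multiplying by x\<^sub>v and then taking the coefficient of the multilinear monomial
   of a set A gives x\<^sub>v times the old coefficient of A plus the old coefficient of A - {v}. Hence the
   (P, Q) entry of M_fg combines M_f(P, Q) with the entries M_f(P - {v}, Q) of the same column
   (v \<in> P) and M_f(P, Q - {v}) of the same row (v \<in> Q). So at every point M_fg = C M_f + M_f D,
   and rank M_fg \<le> rank (C M_f) + rank (M_f D) \<le> 2 rank M_f. *)

context vec_space
begin

lemma maximal_indpt_cols_exists:
  assumes "A \<in> carrier_mat n nc"
  obtains U where "maximal U (\<lambda>T. T \<subseteq> set (cols A) \<and> lin_indpt T)"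
  using maximal_exists_superset[of "set (cols A)" "\<lambda>T. T \<subseteq> set (cols A) \<and> lin_indpt T" "{}"]
    finite_lin_indpt2 by auto

lemma rank_le_card_spanning_set:
  assumes A: "A \<in> carrier_mat n nc" and T: "finite T" "T \<subseteq> carrier_vec n"
    and cols: "set (cols A) \<subseteq> span T"
  shows "rank A \<le> card T"
proof -
  obtain U where U: "maximal U (\<lambda>T. T \<subseteq> set (cols A) \<and> lin_indpt T)"
    using maximal_indpt_cols_exists[OF A] .
  then have "U \<subseteq> span T" "lin_indpt U" "finite U"
    using cols infinite_super[of U "set (cols A)"] unfolding maximal_def by auto
  then have "card U \<le> card T"
    using replacement[OF _ T(1,2)] by fastforce
  then show ?thesis
    using rank_card_indpt[OF A U] by simp
qed

lemma obtain_spanning_set_card_rank: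
  assumes A: "A \<in> carrier_mat n nc"
  obtains T where "finite T" "T \<subseteq> carrier_vec n" "card T = rank A" "set (cols A) \<subseteq> span T"
proof -
  obtain U where U: "maximal U (\<lambda>T. T \<subseteq> set (cols A) \<and> lin_indpt T)"
    using maximal_indpt_cols_exists[OF A] .
  have U_cols: "U \<subseteq> set (cols A)" and indpt: "lin_indpt U"
    using U unfolding maximal_def by auto
  have cols_carrier: "set (cols A) \<subseteq> carrier_vec n"
    using A cols_dim by blast
  then have U_carrier: "U \<subseteq> carrier_vec n"
    using U_cols by blast
  have "s \<in> span U" if s: "s \<in> set (cols A)" for s
  proof (rule ccontr)
    assume s_notin: "s \<notin> span U"
    then have "s \<notin> U"
      using span_mem[OF U_carrier] by blast
    with s_notin have "lin_indpt (U \<union> {s})"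
      using lin_dep_iff_in_span[OF U_carrier indpt] s cols_carrier by auto
    then have "U \<union> {s} = U"
      using U s U_cols unfolding maximal_def by blast
    with \<open>s \<notin> U\<close> show False by blast
  qed
  moreover have "finite U"
    using infinite_super[OF U_cols] by blast
  ultimately show thesis
    using that[OF _ U_carrier rank_card_indpt[OF A U, symmetric]] by blast
qed

lemma rank_mult_right_le:
  assumes A: "A \<in> carrier_mat n k" and D: "D \<in> carrier_mat k nc"
  shows "rank (A * D) \<le> rank A"
proof -
  obtain T where T: "finite T" "T \<subseteq> carrier_vec n" "card T = rank A"
      and cols: "set (cols A) \<subseteq> span T"
    using obtain_spanning_set_card_rank[OF A] by metis
  have "set (cols (A * D)) \<subseteq> span T"
  proof
    fix c assume "c \<in> set (cols (A * D))"
    then obtain j where "j < nc" "c = col (A * D) j"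
      using A D by (auto simp: cols_def)
    then have "j < nc" "c = A *\<^sub>v col D j"
      using A D by (simp_all add: mult_mat_vec_def)
    then have "c \<in> col_space A"
      using col_space_eq[OF A] A D by auto
    then show "c \<in> span T"
      unfolding col_space_def using span_subsetI[OF T(2) cols] by blast
  qed
  then show ?thesis
    using rank_le_card_spanning_set[OF _ T(1,2)] T(3) A D by (metis mult_carrier_mat)
qed

lemma rank_mult_left_le:
  assumes C: "C \<in> carrier_mat n n" and A: "A \<in> carrier_mat n nc"
  shows "rank (C * A) \<le> rank A"
proof -
  obtain T where T: "finite T" "T \<subseteq> carrier_vec n" "card T = rank A"
      and cols: "set (cols A) \<subseteq> span T"
    using obtain_spanning_set_card_rank[OF A] by metis
  (* A = B X for the matrix B whose columns span the column space of A, so C A = (C B) X. *)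
  obtain ts where ts: "set ts = T" "distinct ts"
    using T(1) finite_distinct_list by blast
  define B where "B = mat_of_cols n ts"
  have B: "B \<in> carrier_mat n (card T)" and cols_B: "set (cols B) = T"
    unfolding B_def using ts T(2) distinct_card by fastforce+
  have CB: "C * B \<in> carrier_mat n (card T)"
    using B C by simp
  have cols_CA: "set (cols (C * A)) \<subseteq> col_space (C * B)"
  proof
    fix c assume "c \<in> set (cols (C * A))"
    then obtain j where "j < nc" "c = col (C * A) j"
      using A C by (auto simp: cols_def)
    then have j: "j < nc" "c = C *\<^sub>v col A j"
      using A C by (simp_all add: mult_mat_vec_def)
    have "col A j \<in> col_space B"
      using cols j A unfolding col_space_def cols_B by (auto simp: cols_def)
    then obtain x where x: "x \<in> carrier_vec (card T)" "col A j = B *\<^sub>v x"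
      using col_space_eq[OF B] B by auto
    have "c = (C * B) *\<^sub>v x"
      using j x B C by (simp add: assoc_mult_mat_vec)
    then show "c \<in> col_space (C * B)"
      using col_space_eq[OF CB] x CB B C by auto
  qed
  have "set (cols (C * B)) \<subseteq> carrier_vec n"
    using CB cols_dim by blast
  then have "rank (C * A) \<le> card (set (cols (C * B)))"
    using rank_le_card_spanning_set[OF mult_carrier_mat[OF C A] List.finite_set] cols_CA
    unfolding col_space_def by blast
  also have "\<dots> \<le> card T"
    using card_length[of "cols (C * B)"] B by simp
  finally show ?thesis using T(3) by simp
qed

lemma rank_two_sided_le:
  assumes "C \<in> carrier_mat n n" "M \<in> carrier_mat n nc" "D \<in> carrier_mat nc nc"
  shows "rank (C * M + M * D) \<le> 2 * rank M"
  using rank_subadditive[of "C * M" nc "M * D"] rank_mult_left_le[of C M nc]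
    rank_mult_right_le[of M nc D nc] assms
  by simp

end

lemma mdvd_iff_add: "mdvd \<mu> \<nu> \<longleftrightarrow> (\<exists>\<kappa>. \<nu> = \<kappa> + \<mu>)"
proof
  assume "mdvd \<mu> \<nu>"
  then have "\<nu> = (\<nu> - \<mu>) + \<mu>"
    unfolding mdvd_def by (intro poly_mapping_eqI) (simp add: lookup_add lookup_minus)
  then show "\<exists>\<kappa>. \<nu> = \<kappa> + \<mu>" ..
qed (auto simp: mdvd_def lookup_add)

lemma lookup_mult_single:
  fixes f :: "('v, 'a::comm_semiring_1) mpoly"
  shows "Poly_Mapping.lookup (f * Poly_Mapping.single \<mu> c) \<nu> =
    (if mdvd \<mu> \<nu> then Poly_Mapping.lookup f (\<nu> - \<mu>) * c else 0)"
proof -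
  have "(\<Sum>\<kappa>'. (c when \<mu> = \<kappa>') when \<nu> = \<kappa> + \<kappa>') = (c when \<nu> = \<kappa> + \<mu>)" for \<kappa>
    by (subst when_commute) simp
  then have "Poly_Mapping.lookup (f * Poly_Mapping.single \<mu> c) \<nu> =
      (\<Sum>\<kappa>. Poly_Mapping.lookup f \<kappa> * (c when \<nu> = \<kappa> + \<mu>))"
    by (simp add: lookup_mult lookup_single)
  also have "\<dots> = (if mdvd \<mu> \<nu> then Poly_Mapping.lookup f (\<nu> - \<mu>) * c else 0)"
  proof (cases "mdvd \<mu> \<nu>")
    case True
    then have "\<nu> = \<kappa> + \<mu> \<longleftrightarrow> \<kappa> = \<nu> - \<mu>" for \<kappa>
      by (auto simp: mdvd_iff_add)
    then show ?thesis
      using True by (simp add: mult_when)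
  next
    case False
    then show ?thesis
      by (auto simp: mdvd_iff_add)
  qed
  finally show ?thesis .
qed

lemma lookup_ml_mono: "finite A \<Longrightarrow> Poly_Mapping.lookup (ml_mono A) v = (if v \<in> A then 1 else 0)"
  unfolding ml_mono_def by (induction A rule: finite_induct) (auto simp: lookup_add lookup_single when_def)

lemma keys_ml_mono: "finite A \<Longrightarrow> Poly_Mapping.keys (ml_mono A) = A"
  by (auto simp: in_keys_iff lookup_ml_mono split: if_splits)

lemma ml_poly_mult_disjoint:
  "finite P \<Longrightarrow> finite Q \<Longrightarrow> P \<inter> Q = {} \<Longrightarrow>
    ml_poly P * ml_poly Q = (ml_poly (P \<union> Q) :: ('v, 'a::comm_semiring_1) mpoly)"
  unfolding ml_poly_def ml_mono_def by (simp add: mult_single sum.union_disjoint)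

(* The cofactor of the multilinear monomial of A in f, keeping only the monomials in the
   variables of A: this is the G of pcm_entry, without the definite description. *)
definition ml_coeff :: "('v, 'a::zero) mpoly \<Rightarrow> 'v set \<Rightarrow> ('v, 'a) mpoly" where
  "ml_coeff f A = Abs_poly_mapping (\<lambda>\<nu>.
     if Poly_Mapping.keys \<nu> \<subseteq> A then Poly_Mapping.lookup f (\<nu> + ml_mono A) else 0)"

lemma lookup_ml_coeff:
  "Poly_Mapping.lookup (ml_coeff f A) \<nu> =
    (if Poly_Mapping.keys \<nu> \<subseteq> A then Poly_Mapping.lookup f (\<nu> + ml_mono A) else 0)"
proof -
  have "{\<nu>. (if Poly_Mapping.keys \<nu> \<subseteq> A then Poly_Mapping.lookup f (\<nu> + ml_mono A) else 0) \<noteq> 0}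
      \<subseteq> (\<lambda>\<mu>. \<mu> - ml_mono A) ` Poly_Mapping.keys f"
    by (auto simp: in_keys_iff split: if_splits intro!: image_eqI[where x = "_ + ml_mono A"])
  then have "finite {\<nu>. (if Poly_Mapping.keys \<nu> \<subseteq> A then Poly_Mapping.lookup f (\<nu> + ml_mono A) else 0) \<noteq> 0}"
    by (rule finite_subset) simp
  then show ?thesis
    unfolding ml_coeff_def by simp
qed

lemma ml_coeff_sum: "ml_coeff (\<Sum>i\<in>I. h i) A = (\<Sum>i\<in>I. ml_coeff (h i) A)"
  by (rule poly_mapping_eqI) (simp add: lookup_ml_coeff lookup_sum)

lemma vars_subset_iff: "vars G \<subseteq> A \<longleftrightarrow> (\<forall>\<nu>\<in>Poly_Mapping.keys G. Poly_Mapping.keys \<nu> \<subseteq> A)"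
  unfolding vars_def by auto

lemma pcm_entry_eq_ml_coeff:
  fixes f :: "('v, 'a::field) mpoly"
  assumes fin: "finite P" "finite Q" and disj: "P \<inter> Q = {}"
  shows "pcm_entry f P Q = ml_coeff f (P \<union> Q)"
proof -
  define A where "A = P \<union> Q"
  have finA: "finite A"
    unfolding A_def using fin by simp
  have lookup_ml_poly_mult: "Poly_Mapping.lookup (ml_poly A * G) \<nu> =
      (if mdvd (ml_mono A) \<nu> then Poly_Mapping.lookup G (\<nu> - ml_mono A) else 0)" for G :: "('v, 'a) mpoly" and \<nu>
    unfolding ml_poly_def by (subst mult.commute) (simp add: lookup_mult_single)
  let ?rem_ok = "\<lambda>R :: ('v, 'a) mpoly. \<forall>\<mu>\<in>Poly_Mapping.keys R.
      \<not> (mdvd (ml_mono A) \<mu> \<and> Poly_Mapping.keys \<mu> \<subseteq> A)"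
  have "pcm_entry f P Q = (THE G. vars G \<subseteq> A \<and> (\<exists>R. f = ml_poly A * G + R \<and> ?rem_ok R))"
    unfolding pcm_entry_def ml_poly_mult_disjoint[OF fin disj] A_def ..
  also have "\<dots> = ml_coeff f A"
  proof (rule the_equality)
    show "vars (ml_coeff f A) \<subseteq> A \<and> (\<exists>R. f = ml_poly A * ml_coeff f A + R \<and> ?rem_ok R)"
    proof (intro conjI exI)
      show "vars (ml_coeff f A) \<subseteq> A"
        unfolding vars_subset_iff by (metis in_keys_iff lookup_ml_coeff)
      show "f = ml_poly A * ml_coeff f A + (f - ml_poly A * ml_coeff f A)"
        by simp
      show "?rem_ok (f - ml_poly A * ml_coeff f A)"
      proof (intro ballI notI)
        fix \<mu> assume \<mu>: "\<mu> \<in> Poly_Mapping.keys (f - ml_poly A * ml_coeff f A)"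
          and divisible: "mdvd (ml_mono A) \<mu> \<and> Poly_Mapping.keys \<mu> \<subseteq> A"
        then obtain \<kappa> where \<kappa>: "\<mu> = \<kappa> + ml_mono A"
          by (auto simp: mdvd_iff_add)
        then have "Poly_Mapping.keys \<kappa> \<subseteq> A"
          using divisible by (auto simp: in_keys_iff lookup_add)
        then show False
          using \<mu> \<kappa> by (simp add: in_keys_iff lookup_minus lookup_ml_poly_mult lookup_ml_coeff mdvd_iff_add)
      qed
    qed
  next
    fix G assume "vars G \<subseteq> A \<and> (\<exists>R. f = ml_poly A * G + R \<and> ?rem_ok R)"
    then obtain R where G: "vars G \<subseteq> A" and f: "f = ml_poly A * G + R" and R: "?rem_ok R"
      by blast
    show "G = ml_coeff f A"
    proof (rule poly_mapping_eqI)
      fix \<nu>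
      show "Poly_Mapping.lookup G \<nu> = Poly_Mapping.lookup (ml_coeff f A) \<nu>"
      proof (cases "Poly_Mapping.keys \<nu> \<subseteq> A")
        case True
        then have "Poly_Mapping.keys (\<nu> + ml_mono A) \<subseteq> A"
          using keys_add[of \<nu> "ml_mono A"] keys_ml_mono[OF finA] by auto
        then have "Poly_Mapping.lookup R (\<nu> + ml_mono A) = 0"
          using R by (auto simp: in_keys_iff mdvd_iff_add)
        then show ?thesis
          using True by (simp add: f lookup_add lookup_ml_poly_mult lookup_ml_coeff mdvd_iff_add)
      next
        case False
        then show ?thesis
          using G by (auto simp: vars_subset_iff in_keys_iff lookup_ml_coeff)
      qed
    qed
  qed
  finally show ?thesis
    unfolding A_def .
qed

definition var_mono :: "'v \<Rightarrow> 'v \<Rightarrow>\<^sub>0 nat" where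
  "var_mono v = Poly_Mapping.single v 1"

lemma lookup_var_mono [simp]: "Poly_Mapping.lookup (var_mono v) w = (if w = v then 1 else 0)"
  by (simp add: var_mono_def lookup_single)

lemma keys_var_mono [simp]: "Poly_Mapping.keys (var_mono v) = {v}"
  by (simp add: var_mono_def)

lemma var_mono_eq_iff [simp]: "var_mono v = var_mono w \<longleftrightarrow> v = w"
  by (metis lookup_var_mono one_neq_zero)

definition mono_eval :: "('v \<Rightarrow> 'a::comm_semiring_1) \<Rightarrow> ('v \<Rightarrow>\<^sub>0 nat) \<Rightarrow> 'a" where
  "mono_eval S \<mu> = (\<Prod>v\<in>Poly_Mapping.keys \<mu>. S v ^ Poly_Mapping.lookup \<mu> v)"

lemma mono_eval_eq_prod_superset:
  "finite K \<Longrightarrow> Poly_Mapping.keys \<mu> \<subseteq> K \<Longrightarrow> mono_eval S \<mu> = (\<Prod>v\<in>K. S v ^ Poly_Mapping.lookup \<mu> v)"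
  unfolding mono_eval_def by (rule prod.mono_neutral_left) (auto simp: in_keys_iff)

lemma mono_eval_add: "mono_eval S (\<mu> + \<nu>) = mono_eval S \<mu> * mono_eval S \<nu>"
proof -
  define K where "K = Poly_Mapping.keys \<mu> \<union> Poly_Mapping.keys \<nu>"
  have K: "finite K" "Poly_Mapping.keys (\<mu> + \<nu>) \<subseteq> K"
      and keys: "Poly_Mapping.keys \<mu> \<subseteq> K" "Poly_Mapping.keys \<nu> \<subseteq> K"
    unfolding K_def using keys_add[of \<mu> \<nu>] by auto
  have "mono_eval S (\<mu> + \<nu>) = (\<Prod>v\<in>K. S v ^ Poly_Mapping.lookup (\<mu> + \<nu>) v)"
    by (rule mono_eval_eq_prod_superset[OF K])
  also have "\<dots> = (\<Prod>v\<in>K. S v ^ Poly_Mapping.lookup \<mu> v) * (\<Prod>v\<in>K. S v ^ Poly_Mapping.lookup \<nu> v)"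
    by (simp add: lookup_add power_add prod.distrib)
  also have "\<dots> = mono_eval S \<mu> * mono_eval S \<nu>"
    by (simp only: mono_eval_eq_prod_superset[OF K(1) keys(1)] mono_eval_eq_prod_superset[OF K(1) keys(2)])
  finally show ?thesis .
qed

lemma mono_eval_zero [simp]: "mono_eval S 0 = 1"
  by (simp add: mono_eval_def)

lemma mono_eval_var_mono [simp]: "mono_eval S (var_mono v) = S v"
  by (simp add: mono_eval_def)

lemma peval_eq_sum_superset:
  "finite K \<Longrightarrow> Poly_Mapping.keys p \<subseteq> K \<Longrightarrow>
    peval S p = (\<Sum>\<mu>\<in>K. Poly_Mapping.lookup p \<mu> * mono_eval S \<mu>)"
  unfolding peval_def mono_eval_def by (rule sum.mono_neutral_left) (auto simp: in_keys_iff)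

lemma peval_add: "peval S (p + q) = peval S p + peval S q"
proof -
  define K where "K = Poly_Mapping.keys p \<union> Poly_Mapping.keys q"
  have K: "finite K" "Poly_Mapping.keys (p + q) \<subseteq> K"
      and keys: "Poly_Mapping.keys p \<subseteq> K" "Poly_Mapping.keys q \<subseteq> K"
    unfolding K_def using keys_add[of p q] by auto
  have "peval S (p + q) = (\<Sum>\<mu>\<in>K. Poly_Mapping.lookup (p + q) \<mu> * mono_eval S \<mu>)"
    by (rule peval_eq_sum_superset[OF K])
  also have "\<dots> = (\<Sum>\<mu>\<in>K. Poly_Mapping.lookup p \<mu> * mono_eval S \<mu>) + (\<Sum>\<mu>\<in>K. Poly_Mapping.lookup q \<mu> * mono_eval S \<mu>)"
    by (simp add: lookup_add distrib_right sum.distrib)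
  also have "\<dots> = peval S p + peval S q"
    by (simp only: peval_eq_sum_superset[OF K(1) keys(1)] peval_eq_sum_superset[OF K(1) keys(2)])
  finally show ?thesis .
qed

lemma peval_zero [simp]: "peval S 0 = 0"
  by (simp add: peval_def)

lemma peval_sum: "peval S (\<Sum>i\<in>I. h i) = (\<Sum>i\<in>I. peval S (h i))"
  by (induction I rule: infinite_finite_induct) (simp_all add: peval_add)

lemma peval_mult_single: "peval S (p * Poly_Mapping.single \<mu> c) = peval S p * (c * mono_eval S \<mu>)"
proof -
  define K where "K = (\<lambda>\<kappa>. \<kappa> + \<mu>) ` Poly_Mapping.keys p"
  have "Poly_Mapping.keys (p * Poly_Mapping.single \<mu> c) \<subseteq> K"
    unfolding K_def
    by (fastforce simp: in_keys_iff lookup_mult_single mdvd_iff_add split: if_splits)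
  then have "peval S (p * Poly_Mapping.single \<mu> c) =
      (\<Sum>\<nu>\<in>K. Poly_Mapping.lookup (p * Poly_Mapping.single \<mu> c) \<nu> * mono_eval S \<nu>)"
    by (intro peval_eq_sum_superset) (simp_all add: K_def)
  also have "\<dots> = (\<Sum>\<kappa>\<in>Poly_Mapping.keys p. Poly_Mapping.lookup p \<kappa> * c * (mono_eval S \<kappa> * mono_eval S \<mu>))"
    unfolding K_def
    by (subst sum.reindex) (auto simp: inj_on_def lookup_mult_single mdvd_iff_add mono_eval_add)
  also have "\<dots> = peval S p * (c * mono_eval S \<mu>)"
    by (simp add: peval_eq_sum_superset[of "Poly_Mapping.keys p"] sum_distrib_left ac_simps)
  finally show ?thesis .
qed

lemma mdvd_var_mono_iff: "mdvd (var_mono v) \<nu> \<longleftrightarrow> Poly_Mapping.lookup \<nu> v \<noteq> 0"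
proof
  assume "mdvd (var_mono v) \<nu>"
  then have "Poly_Mapping.lookup (var_mono v) v \<le> Poly_Mapping.lookup \<nu> v"
    unfolding mdvd_def by blast
  then show "Poly_Mapping.lookup \<nu> v \<noteq> 0"
    by simp
qed (simp add: mdvd_def)

lemma ml_coeff_mult_var_notin:
  fixes f :: "('v, 'a::comm_semiring_1) mpoly"
  assumes "finite A" "v \<notin> A"
  shows "ml_coeff (f * Poly_Mapping.single (var_mono v) c) A = 0"
proof (rule poly_mapping_eqI)
  fix \<nu>
  have "\<not> mdvd (var_mono v) (\<nu> + ml_mono A)" if "Poly_Mapping.keys \<nu> \<subseteq> A"
    using that assms unfolding mdvd_var_mono_iff by (auto simp: lookup_add lookup_ml_mono in_keys_iff)
  then show "Poly_Mapping.lookup (ml_coeff (f * Poly_Mapping.single (var_mono v) c) A) \<nu> =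
      Poly_Mapping.lookup 0 \<nu>"
    by (simp add: lookup_ml_coeff lookup_mult_single)
qed

lemma ml_coeff_mult_var_in:
  fixes f :: "('v, 'a::comm_semiring_1) mpoly"
  assumes fin: "finite A" and v: "v \<in> A"
  shows "ml_coeff (f * Poly_Mapping.single (var_mono v) c) A =
    ml_coeff f A * Poly_Mapping.single (var_mono v) c + ml_coeff f (A - {v}) * Poly_Mapping.single 0 c"
proof (rule poly_mapping_eqI)
  fix \<nu>
  have lookups: "Poly_Mapping.lookup (ml_mono A) w = (if w \<in> A then 1 else 0)"
    "Poly_Mapping.lookup (ml_mono (A - {v})) w = (if w \<in> A \<and> w \<noteq> v then 1 else 0)" for w
    using fin by (simp_all add: lookup_ml_mono)
  have dvd_shift: "mdvd (var_mono v) (\<nu> + ml_mono A)"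
    unfolding mdvd_var_mono_iff using v by (simp add: lookup_add lookups)
  have dvd_0: "mdvd 0 \<nu>"
    by (simp add: mdvd_def)
  show "Poly_Mapping.lookup (ml_coeff (f * Poly_Mapping.single (var_mono v) c) A) \<nu> =
      Poly_Mapping.lookup (ml_coeff f A * Poly_Mapping.single (var_mono v) c
        + ml_coeff f (A - {v}) * Poly_Mapping.single 0 c) \<nu>"
  proof (cases "Poly_Mapping.keys \<nu> \<subseteq> A")
    case keys: True
    show ?thesis
    proof (cases "Poly_Mapping.lookup \<nu> v = 0")
      case True
      have "\<nu> + ml_mono A - var_mono v = \<nu> + ml_mono (A - {v})"
        using True by (intro poly_mapping_eqI) (simp add: lookup_add lookup_minus lookups)
      moreover have "Poly_Mapping.keys \<nu> \<subseteq> A - {v}"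
        using keys True by (auto simp: in_keys_iff)
      moreover have "\<not> mdvd (var_mono v) \<nu>"
        unfolding mdvd_var_mono_iff using True by simp
      ultimately show ?thesis
        using keys dvd_shift dvd_0 by (simp add: lookup_add lookup_ml_coeff lookup_mult_single)
    next
      case False
      have "\<nu> + ml_mono A - var_mono v = \<nu> - var_mono v + ml_mono A"
        using False by (intro poly_mapping_eqI) (simp add: lookup_add lookup_minus lookups)
      moreover have "Poly_Mapping.keys (\<nu> - var_mono v) \<subseteq> A"
        using keys by (auto simp: in_keys_iff lookup_minus)
      moreover have "\<not> Poly_Mapping.keys \<nu> \<subseteq> A - {v}"
        using False in_keys_iff[of v \<nu>] by blast
      moreover have "mdvd (var_mono v) \<nu>"
        unfolding mdvd_var_mono_iff using False by simp
      ultimately show ?thesis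
        using keys dvd_shift by (simp add: lookup_add lookup_ml_coeff lookup_mult_single)
    qed
  next
    case False
    then obtain w where w: "w \<in> Poly_Mapping.keys \<nu>" "w \<notin> A"
      by blast
    then have "w \<in> Poly_Mapping.keys (\<nu> - var_mono v)"
      using v by (auto simp: in_keys_iff lookup_minus)
    then have "\<not> Poly_Mapping.keys (\<nu> - var_mono v) \<subseteq> A" "\<not> Poly_Mapping.keys \<nu> \<subseteq> A - {v}"
      using w by blast+
    then show ?thesis
      using False by (simp add: lookup_add lookup_ml_coeff lookup_mult_single)
  qed
qed

lemma total_deg_eq_1_imp_var:
  assumes "total_deg \<mu> = 1"
  obtains v where "\<mu> = var_mono v"
proof -
  obtain v where v: "v \<in> Poly_Mapping.keys \<mu>" "Poly_Mapping.lookup \<mu> v = 1"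
      and others: "\<forall>w\<in>Poly_Mapping.keys \<mu>. v \<noteq> w \<longrightarrow> Poly_Mapping.lookup \<mu> w = 0"
    using assms unfolding total_deg_def by (auto simp: sum_eq_Suc0_iff)
  have "\<mu> = var_mono v"
    using v others by (intro poly_mapping_eqI) (metis in_keys_iff lookup_var_mono)
  then show thesis ..
qed

lemma linear_form_eq_sum_vars:
  assumes "linear_form X g"
  shows "g = (\<Sum>v\<in>vars g. Poly_Mapping.single (var_mono v)
                (Poly_Mapping.lookup g (var_mono v)))"
proof (rule poly_mapping_eqI)
  fix \<nu>
  have finite_vars: "finite (vars g)"
    unfolding vars_def by simp
  have "Poly_Mapping.lookup (\<Sum>v\<in>vars g. Poly_Mapping.single (var_mono v)
        (Poly_Mapping.lookup g (var_mono v))) \<nu>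
      = (\<Sum>v\<in>vars g. if \<nu> = var_mono v then Poly_Mapping.lookup g \<nu> else 0)"
    by (auto simp: lookup_sum lookup_single when_def intro: sum.cong)
  also have "\<dots> = Poly_Mapping.lookup g \<nu>"
  proof (cases "\<nu> \<in> Poly_Mapping.keys g")
    case True
    then obtain w where w: "\<nu> = var_mono w"
      using assms total_deg_eq_1_imp_var unfolding linear_form_def by blast
    then have "w \<in> vars g"
      using True unfolding vars_def by force
    moreover have "\<nu> = var_mono v \<longleftrightarrow> v = w" for v
      using w by auto
    ultimately show ?thesis
      using finite_vars by simp
  next
    case False
    then have "Poly_Mapping.lookup g \<nu> = 0"
      by (simp add: in_keys_iff)
    then show ?thesis
      by (auto intro: sum.neutral)
  qed
  finally show "Poly_Mapping.lookup g \<nu> = Poly_Mapping.lookup (\<Sum>v\<in>vars g.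
      Poly_Mapping.single (var_mono v) (Poly_Mapping.lookup g (var_mono v))) \<nu>" ..
qed

lemma peval_ml_coeff_mult_linear_form:
  fixes f g :: "('v, 'a::field) mpoly"
  assumes fin: "finite A" and lin: "linear_form X g"
  defines "a \<equiv> \<lambda>v. Poly_Mapping.lookup g (var_mono v)"
  shows "peval S (ml_coeff (f * g) A) =
    (\<Sum>v\<in>vars g \<inter> A. a v * (S v * peval S (ml_coeff f A) + peval S (ml_coeff f (A - {v}))))"
proof -
  have finite_vars: "finite (vars g)"
    unfolding vars_def by simp
  have "f * g = (\<Sum>v\<in>vars g. f * Poly_Mapping.single (var_mono v) (a v))"
    unfolding a_def by (subst linear_form_eq_sum_vars[OF lin]) (simp add: sum_distrib_left)
  moreover have "peval S (ml_coeff (f * Poly_Mapping.single (var_mono v) c) A) =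
      (if v \<in> A then c * (S v * peval S (ml_coeff f A) + peval S (ml_coeff f (A - {v}))) else 0)" for v c
  proof (cases "v \<in> A")
    case True
    then show ?thesis
      by (simp only: ml_coeff_mult_var_in[OF fin] if_True peval_add peval_mult_single)
        (simp add: algebra_simps)
  qed (simp add: ml_coeff_mult_var_notin[OF fin])
  ultimately have "peval S (ml_coeff (f * g) A) =
      (\<Sum>v\<in>vars g. if v \<in> A then a v * (S v * peval S (ml_coeff f A) + peval S (ml_coeff f (A - {v})))
                    else 0)"
    by (simp only: ml_coeff_sum peval_sum)
  also have "\<dots> = (\<Sum>v\<in>vars g \<inter> A. a v * (S v * peval S (ml_coeff f A) + peval S (ml_coeff f (A - {v}))))"
    by (simp add: sum.inter_restrict[OF finite_vars])
  finally show ?thesis .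
qed

lemma subset_enum: "finite A \<Longrightarrow> set (subset_enum A) = Pow A" "finite A \<Longrightarrow> distinct (subset_enum A)"
  unfolding subset_enum_def by (metis (mono_tags, lifting) finite_Pow_iff finite_distinct_list someI_ex)+

lemma sum_nth_distinct: "distinct xs \<Longrightarrow> (\<Sum>k<length xs. h (xs ! k)) = sum h (set xs)"
  by (simp add: sum.distinct_set_conv_list sum_list_sum_nth atLeast0LessThan)

lemma mat_mult_row_lincomb:
  assumes "distinct xs"
  shows "mat (length xs) (length xs) (\<lambda>(i, k). c (xs ! i) (xs ! k)) * mat (length xs) nc (\<lambda>(k, j). F (xs ! k) j)
    = mat (length xs) nc (\<lambda>(i, j). \<Sum>y\<in>set xs. c (xs ! i) y * F y j)"
proof (rule eq_matI)
  fix i j assume "i < dim_row (mat (length xs) nc (\<lambda>(i, j). \<Sum>y\<in>set xs. c (xs ! i) y * F y j))"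
    and "j < dim_col (mat (length xs) nc (\<lambda>(i, j). \<Sum>y\<in>set xs. c (xs ! i) y * F y j))"
  then show "(mat (length xs) (length xs) (\<lambda>(i, k). c (xs ! i) (xs ! k)) * mat (length xs) nc (\<lambda>(k, j). F (xs ! k) j)) $$ (i, j)
      = mat (length xs) nc (\<lambda>(i, j). \<Sum>y\<in>set xs. c (xs ! i) y * F y j) $$ (i, j)"
    using sum_nth_distinct[OF assms, of "\<lambda>y. c (xs ! i) y * F y j"]
    by (simp add: scalar_prod_def atLeast0LessThan)
qed simp_all

lemma mat_mult_col_lincomb:
  assumes "distinct ys"
  shows "mat nr (length ys) (\<lambda>(i, k). F i (ys ! k)) * mat (length ys) (length ys) (\<lambda>(k, j). d (ys ! k) (ys ! j))
    = mat nr (length ys) (\<lambda>(i, j). \<Sum>z\<in>set ys. F i z * d z (ys ! j))"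
proof (rule eq_matI)
  fix i j assume "i < dim_row (mat nr (length ys) (\<lambda>(i, j). \<Sum>z\<in>set ys. F i z * d z (ys ! j)))"
    and "j < dim_col (mat nr (length ys) (\<lambda>(i, j). \<Sum>z\<in>set ys. F i z * d z (ys ! j)))"
  then show "(mat nr (length ys) (\<lambda>(i, k). F i (ys ! k)) * mat (length ys) (length ys) (\<lambda>(k, j). d (ys ! k) (ys ! j))) $$ (i, j)
      = mat nr (length ys) (\<lambda>(i, j). \<Sum>z\<in>set ys. F i z * d z (ys ! j)) $$ (i, j)"
    using sum_nth_distinct[OF assms, of "\<lambda>z. F i z * d z (ys ! j)"]
    by (simp add: scalar_prod_def atLeast0LessThan)
qed simp_all

lemma pcm_eval_eq_ml_coeff:
  assumes "finite Y" "finite Z" "Y \<inter> Z = {}"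
  shows "pcm_eval Y Z f S = mat (length (subset_enum Y)) (length (subset_enum Z))
    (\<lambda>(i, j). peval S (ml_coeff f (subset_enum Y ! i \<union> subset_enum Z ! j)))"
  unfolding pcm_eval_def
proof (intro cong_mat refl)
  fix i j assume "i < length (subset_enum Y)" "j < length (subset_enum Z)"
  then have "subset_enum Y ! i \<subseteq> Y" "subset_enum Z ! j \<subseteq> Z"
    using nth_mem subset_enum(1) assms by blast+
  then have "finite (subset_enum Y ! i)" "finite (subset_enum Z ! j)"
      "subset_enum Y ! i \<inter> subset_enum Z ! j = {}"
    using assms finite_subset by blast+
  then show "(\<lambda>(i, j). peval S (pcm_entry f (subset_enum Y ! i) (subset_enum Z ! j))) (i, j) =
      (\<lambda>(i, j). peval S (ml_coeff f (subset_enum Y ! i \<union> subset_enum Z ! j))) (i, j)"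
    by (simp add: pcm_entry_eq_ml_coeff)
qed

lemma sum_two_point_coeffs:
  fixes a s :: "'v \<Rightarrow> 'a::comm_ring_1"
  assumes "finite U" "x \<in> U" "\<And>v. v \<in> V \<Longrightarrow> r v \<in> U"
  shows "(\<Sum>y\<in>U. (\<Sum>v\<in>V. a v * ((if y = x then s v else 0) + (if y = r v then 1 else 0))) * F y)
    = (\<Sum>v\<in>V. a v * (s v * F x + F (r v)))"
proof -
  let ?c = "\<lambda>y v. (if y = x then s v else 0) + (if y = r v then 1 else 0)"
  have inner: "(\<Sum>y\<in>U. ?c y v * F y) = s v * F x + F (r v)" if "v \<in> V" for v
  proof -
    have "(\<Sum>y\<in>U. ?c y v * F y) = (\<Sum>y\<in>U. if y = x then s v * F y else 0) + (\<Sum>y\<in>U. if y = r v then F y else 0)"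
      by (subst sum.distrib[symmetric]) (rule sum.cong; simp add: distrib_right)
    then show ?thesis
      using assms that by simp
  qed
  have "(\<Sum>y\<in>U. (\<Sum>v\<in>V. a v * ?c y v) * F y) = (\<Sum>y\<in>U. \<Sum>v\<in>V. a v * (?c y v * F y))"
    by (simp only: sum_distrib_right mult.assoc)
  also have "\<dots> = (\<Sum>v\<in>V. a v * (\<Sum>y\<in>U. ?c y v * F y))"
    by (subst sum.swap) (simp only: sum_distrib_left)
  also have "\<dots> = (\<Sum>v\<in>V. a v * (s v * F x + F (r v)))"
    using inner by simp
  finally show ?thesis .
qed

(* Multiplication by \<Sum>\<^sub>v a\<^sub>v x\<^sub>v at the point s, seen on the multilinear coefficients: the weight of the
   coefficient of P' in the new coefficient of P (nonzero only for P' = P and P' = P - {v}). *)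
definition shift_coeff :: "('v \<Rightarrow> 'a::comm_ring_1) \<Rightarrow> ('v \<Rightarrow> 'a) \<Rightarrow> 'v set \<Rightarrow> 'v set \<Rightarrow> 'v set \<Rightarrow> 'a" where
  "shift_coeff a s W P P' = (\<Sum>v\<in>W \<inter> P. a v * ((if P' = P then s v else 0) + (if P' = P - {v} then 1 else 0)))"

lemma peval_ml_coeff_mult_linear_form_split:
  fixes f g :: "('v, 'a::field) mpoly" and S :: "'v \<Rightarrow> 'a"
  assumes fin: "finite Y" "finite Z" and disj: "Y \<inter> Z = {}" and lin: "linear_form X g"
    and P: "P \<subseteq> Y" and Q: "Q \<subseteq> Z"
  defines "c \<equiv> shift_coeff (\<lambda>v. Poly_Mapping.lookup g (var_mono v)) S (vars g)"
    and "E \<equiv> \<lambda>P Q. peval S (ml_coeff f (P \<union> Q))"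
  shows "peval S (ml_coeff (f * g) (P \<union> Q)) = (\<Sum>P'\<in>Pow Y. c P P' * E P' Q) + (\<Sum>Q'\<in>Pow Z. E P Q' * c Q Q')"
proof -
  define a where "a = (\<lambda>v. Poly_Mapping.lookup g (var_mono v))"
  define W where "W = vars g"
  have finite_W: "finite W"
    unfolding W_def vars_def by simp
  have finPQ: "finite (P \<union> Q)" and disjPQ: "P \<inter> Q = {}"
    using P Q fin disj finite_subset by blast+
  let ?term = "\<lambda>v. a v * (S v * E P Q + peval S (ml_coeff f (P \<union> Q - {v})))"
  have "peval S (ml_coeff (f * g) (P \<union> Q)) = (\<Sum>v\<in>W \<inter> P \<union> W \<inter> Q. ?term v)"
    using peval_ml_coeff_mult_linear_form[OF finPQ lin]
    unfolding a_def W_def E_def by (simp add: Int_Un_distrib)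
  also have "\<dots> = (\<Sum>v\<in>W \<inter> P. ?term v) + (\<Sum>v\<in>W \<inter> Q. ?term v)"
    using finite_W disjPQ by (intro sum.union_disjoint) auto
  also have "(\<Sum>v\<in>W \<inter> P. ?term v) = (\<Sum>v\<in>W \<inter> P. a v * (S v * E P Q + E (P - {v}) Q))"
    using disjPQ unfolding E_def by (intro sum.cong refl) (auto intro: arg_cong[where f = "\<lambda>A. _ (ml_coeff f A)"])
  also have "(\<Sum>v\<in>W \<inter> Q. ?term v) = (\<Sum>v\<in>W \<inter> Q. a v * (S v * E P Q + E P (Q - {v})))"
    using disjPQ unfolding E_def by (intro sum.cong refl) (auto intro: arg_cong[where f = "\<lambda>A. _ (ml_coeff f A)"])
  also have "(\<Sum>v\<in>W \<inter> P. a v * (S v * E P Q + E (P - {v}) Q)) = (\<Sum>P'\<in>Pow Y. c P P' * E P' Q)"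
    unfolding c_def shift_coeff_def a_def[symmetric] W_def[symmetric]
    using P fin by (subst sum_two_point_coeffs) auto
  also have "(\<Sum>v\<in>W \<inter> Q. a v * (S v * E P Q + E P (Q - {v}))) = (\<Sum>Q'\<in>Pow Z. E P Q' * c Q Q')"
    unfolding c_def shift_coeff_def a_def[symmetric] W_def[symmetric]
    using Q fin by (subst mult.commute, subst sum_two_point_coeffs) auto
  finally show ?thesis .
qed

lemma pcm_eval_mult_linear_form:
  fixes f g :: "('v, 'a::field) mpoly"
  assumes fin: "finite Y" "finite Z" and disj: "Y \<inter> Z = {}" and lin: "linear_form X g"
  defines "m\<^sub>Y \<equiv> length (subset_enum Y)" and "m\<^sub>Z \<equiv> length (subset_enum Z)"
  obtains C D where "C \<in> carrier_mat m\<^sub>Y m\<^sub>Y" "D \<in> carrier_mat m\<^sub>Z m\<^sub>Z"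
    "pcm_eval Y Z (f * g) S = C * pcm_eval Y Z f S + pcm_eval Y Z f S * D"
proof -
  define c where "c = shift_coeff (\<lambda>v. Poly_Mapping.lookup g (var_mono v)) S (vars g)"
  define E where "E = (\<lambda>P Q. peval S (ml_coeff f (P \<union> Q)))"
  define Ps Qs where "Ps = subset_enum Y" and "Qs = subset_enum Z"
  define C where "C = mat m\<^sub>Y m\<^sub>Y (\<lambda>(i, k). c (Ps ! i) (Ps ! k))"
  define D where "D = mat m\<^sub>Z m\<^sub>Z (\<lambda>(k, j). c (Qs ! j) (Qs ! k))"
  have M: "pcm_eval Y Z f S = mat m\<^sub>Y m\<^sub>Z (\<lambda>(i, j). E (Ps ! i) (Qs ! j))"
    using pcm_eval_eq_ml_coeff[OF fin disj] unfolding E_def Ps_def Qs_def m\<^sub>Y_def m\<^sub>Z_def .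
  have "C * pcm_eval Y Z f S = mat m\<^sub>Y m\<^sub>Z (\<lambda>(i, j). \<Sum>P'\<in>Pow Y. c (Ps ! i) P' * E P' (Qs ! j))"
    using mat_mult_row_lincomb[OF subset_enum(2)[OF fin(1)], of c m\<^sub>Z "\<lambda>P j. E P (Qs ! j)"]
    unfolding M C_def m\<^sub>Y_def Ps_def subset_enum(1)[OF fin(1)] .
  moreover have "pcm_eval Y Z f S * D = mat m\<^sub>Y m\<^sub>Z (\<lambda>(i, j). \<Sum>Q'\<in>Pow Z. E (Ps ! i) Q' * c (Qs ! j) Q')"
    using mat_mult_col_lincomb[OF subset_enum(2)[OF fin(2)], of m\<^sub>Y "\<lambda>i Q. E (Ps ! i) Q" "\<lambda>Q' Q. c Q Q'"]
    unfolding M D_def m\<^sub>Z_def Qs_def subset_enum(1)[OF fin(2)] .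
  moreover have "pcm_eval Y Z (f * g) S = mat m\<^sub>Y m\<^sub>Z (\<lambda>(i, j).
      (\<Sum>P'\<in>Pow Y. c (Ps ! i) P' * E P' (Qs ! j)) + (\<Sum>Q'\<in>Pow Z. E (Ps ! i) Q' * c (Qs ! j) Q'))"
    unfolding pcm_eval_eq_ml_coeff[OF fin disj]
    unfolding m\<^sub>Y_def[symmetric] m\<^sub>Z_def[symmetric]
    unfolding Ps_def[symmetric] Qs_def[symmetric]
  proof (intro cong_mat refl)
    fix i j assume "i < m\<^sub>Y" "j < m\<^sub>Z"
    then have "Ps ! i \<in> Pow Y" "Qs ! j \<in> Pow Z"
      using subset_enum(1) fin unfolding Ps_def Qs_def m\<^sub>Y_def m\<^sub>Z_def by (metis nth_mem)+
    then show "(\<lambda>(i, j). peval S (ml_coeff (f * g) (Ps ! i \<union> Qs ! j))) (i, j) = (\<lambda>(i, j).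
        (\<Sum>P'\<in>Pow Y. c (Ps ! i) P' * E P' (Qs ! j)) + (\<Sum>Q'\<in>Pow Z. E (Ps ! i) Q' * c (Qs ! j) Q')) (i, j)"
      using peval_ml_coeff_mult_linear_form_split[OF fin disj lin] unfolding c_def E_def by simp
  qed
  ultimately have "pcm_eval Y Z (f * g) S = C * pcm_eval Y Z f S + pcm_eval Y Z f S * D"
    by (auto intro: eq_matI)
  moreover have "C \<in> carrier_mat m\<^sub>Y m\<^sub>Y" "D \<in> carrier_mat m\<^sub>Z m\<^sub>Z"
    unfolding C_def D_def by simp_all
  ultimately show thesis
    using that by blast
qed

lemma mat_rank_pcm_eval_mult_linear_form:
  fixes f g :: "('v, 'a::field) mpoly"
  assumes "finite Y" "finite Z" "Y \<inter> Z = {}" "linear_form X g"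
  shows "mat_rank (pcm_eval Y Z (f * g) S) \<le> 2 * mat_rank (pcm_eval Y Z f S)"
proof -
  obtain C D where C: "C \<in> carrier_mat (length (subset_enum Y)) (length (subset_enum Y))"
      and D: "D \<in> carrier_mat (length (subset_enum Z)) (length (subset_enum Z))"
      and eq: "pcm_eval Y Z (f * g) S = C * pcm_eval Y Z f S + pcm_eval Y Z f S * D"
    using pcm_eval_mult_linear_form[OF assms] .
  have M: "pcm_eval Y Z f S \<in> carrier_mat (length (subset_enum Y)) (length (subset_enum Z))"
    unfolding pcm_eval_def by simp
  show ?thesis
    unfolding eq mat_rank_def using vec_space.rank_two_sided_le[OF C M D] C M by simp
qed

lemma mat_rank_le_dim_col: "mat_rank A \<le> dim_col A"
  unfolding mat_rank_def by (rule vec_space.rank_le_nc[OF carrier_matI]) (rule refl)+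

lemma finite_mat_rank_pcm_eval: "finite {mat_rank (pcm_eval Y Z h S) | S. True}"
proof (rule finite_subset)
  show "{mat_rank (pcm_eval Y Z h S) | S. True} \<subseteq> {..length (subset_enum Z)}"
  proof
    fix r assume "r \<in> {mat_rank (pcm_eval Y Z h S) | S. True}"
    then obtain S where "r = mat_rank (pcm_eval Y Z h S)"
      by blast
    then show "r \<in> {..length (subset_enum Z)}"
      using mat_rank_le_dim_col[of "pcm_eval Y Z h S"] by (simp add: pcm_eval_def)
  qed
qed simp

theorem corollary1:
  fixes Y Z :: "'v set" and f g :: "('v, 'a::field) mpoly" and m :: nat
  assumes "finite Y" and "finite Z" and "Y \<inter> Z = {}"
    and "card Y = m" and "card Z = m"
    and "vars f \<subseteq> Y \<union> Z" and "vars g \<subseteq> Y \<union> Z"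
    and "linear_form (Y \<union> Z) g"
  shows "maxrank Y Z (f * g) \<le> 2 * maxrank Y Z f"
  unfolding maxrank_def
proof (rule Max.boundedI[OF finite_mat_rank_pcm_eval])
  fix r assume "r \<in> {mat_rank (pcm_eval Y Z (f * g) S) | S. True}"
  then obtain S where "r = mat_rank (pcm_eval Y Z (f * g) S)"
    by blast
  also have "\<dots> \<le> 2 * mat_rank (pcm_eval Y Z f S)"
    by (rule mat_rank_pcm_eval_mult_linear_form[OF assms(1-3,8)])
  also have "\<dots> \<le> 2 * Max {mat_rank (pcm_eval Y Z f S) | S. True}"
    by (intro mult_le_mono2 Max_ge[OF finite_mat_rank_pcm_eval]) auto
  finally show "r \<le> 2 * Max {mat_rank (pcm_eval Y Z f S) | S. True}" .
qed auto

end
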